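(* Let $A$ and $B$ be layouts and $\bar S$ a nested tuple such that both $\mathrm{shape}(A)$ and $\mathrm{shape}(B)$ refine $\bar S$. Then $\Phi_A=\Phi_B$ if and only if $\mathrm{coal}(A,\bar S)=\mathrm{coal}(B,\bar S)$.
   Context: A nested tuple (of integers) is either an integer (depth $0$) or a finite tuple $(X_1,\dots,X_r)$ of nested tuples (rank $r$, modes $X_i$); its flattening $X^\flat$ lists the integer leaves left to right, $\mathrm{len}(X)$ is its length, $\mathrm{entry}_i(X)$ its $i$-th entry, $\mathrm{size}(X)$ the product of entries. A layout $L=S:D$ consists of nested tuples $S$ (positive) and $D$ (nonnegative) of the same nesting pattern; $L^\flat=S^\flat:D^\flat$; the layout function of a flat layout $(s_i):(d_i)$ is $\Phi(x)=\sum x_id_i$, $x_i=\lfloor x/(s_1\cdots s_{i-1})\rfloor\bmod s_i$, on $[0,\prod s_i)$, and $\Phi_L=\Phi_{L^\flat}$. Flat $\mathrm{coal}^\flat$: remove modes with $s_i=1$, then repeatedly replace adjacent modes $s_i,s_{i+1}:d_i,d_{i+1}$ with $d_{i+1}=s_id_i$ by $s_is_{i+1}:d_i$. For a layout $L$ with $\mathrm{coal}^\flat(L^\flat)=(s_1,\dots,s_k):(d_1,\dots,d_k)$: $\mathrm{coal}(L)$ is this flat layout if $k>1$, $s_1:d_1$ (depth $0$) if $k=1$, and $1:0$ if $k=0$. Refinement: $X'$ refines $X$ if $X$ is an integer equal to $\mathrm{size}(X')$, or both have depth $>0$, equal rank, and each mode of $X'$ refines the corresponding mode of $X$. If $S$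 refines $\bar S$ with $\mathrm{len}(\bar S)=m$, then $S$ is obtained from $\bar S$ by replacing its $i$-th leaf by a nested tuple $S_i$ (of size $\mathrm{entry}_i(\bar S)$); for a layout $L=S:D$ the $i$-th relative mode is $L_i=S_i:D_i$ with $D_i$ the corresponding part of $D$. The relative coalesce $\mathrm{coal}(L,\bar S)$ is the layout obtained from the nesting pattern of $\bar S$ by putting the layout $\mathrm{coal}(L_i)$ (shape and stride simultaneously) in place of the $i$-th leaf, for each $1\le i\le m$. *)

theory Defs
  imports Main
begin

text \<open>Nested tuples of integers are nat nt
  (all entries in the paper are nonnegative); a layout is a nested tuple of
  pairs (shape entry, stride entry), which encodes that shape and stride have
  the same nesting pattern.\<close>

datatype 'a nt = Leaf 'a | Node "'a nt list"

fun flat :: "'a nt \<Rightarrow> 'a list" where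
  "flat (Leaf a) = [a]"
| "flat (Node xs) = concat (map flat xs)"

definition nt_size :: "nat nt \<Rightarrow> nat" where
  "nt_size X = prod_list (flat X)"

type_synonym layout = "(nat \<times> nat) nt"

definition shape :: "layout \<Rightarrow> nat nt" where
  "shape L = map_nt fst L"

definition stride :: "layout \<Rightarrow> nat nt" where
  "stride L = map_nt snd L"

definition is_layout :: "layout \<Rightarrow> bool" where
  "is_layout L \<longleftrightarrow> (\<forall>s \<in> set (flat (shape L)). 0 < s)"

definition phi_flat :: "(nat \<times> nat) list \<Rightarrow> nat \<Rightarrow> nat" where
  "phi_flat M x = (\<Sum>i<length M.
      ((x div (\<Prod>j<i. fst (M ! j))) mod fst (M ! i)) * snd (M ! i))"

definition layout_fun :: "layout \<Rightarrow> nat \<Rightarrow> nat option" where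
  "layout_fun L = (\<lambda>x. if x < nt_size (shape L) then Some (phi_flat (flat L) x) else None)"

text \<open>Repeated merging of adjacent modes (s_i,d_i),(s_(i+1),d_(i+1)) with
  d_(i+1) = s_i d_i into (s_i s_(i+1), d_i); performed exhaustively
  (the result is independent of the order of merges).\<close>
fun merge_modes :: "(nat \<times> nat) list \<Rightarrow> (nat \<times> nat) list" where
  "merge_modes [] = []"
| "merge_modes ((s, d) # rest) =
     (case merge_modes rest of
        [] \<Rightarrow> [(s, d)]
      | (s2, d2) # r \<Rightarrow> (if d2 = s * d then (s * s2, d) # r else (s, d) # (s2, d2) # r))"

definition coal_flat :: "(nat \<times> nat) list \<Rightarrow> (nat \<times> nat) list" where
  "coal_flat M = merge_modes (filter (\<lambda>(s, d). s \<noteq> 1) M)"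

definition coal :: "layout \<Rightarrow> layout" where
  "coal L = (let C = coal_flat (flat L) in
     if length C > 1 then Node (map Leaf C)
     else if length C = 1 then Leaf (hd C)
     else Leaf (1, 0))"

fun refines :: "nat nt \<Rightarrow> nat nt \<Rightarrow> bool" where
  "refines X' (Leaf n) \<longleftrightarrow> n = nt_size X'"
| "refines (Leaf _) (Node _) \<longleftrightarrow> False"
| "refines (Node xs') (Node xs) \<longleftrightarrow>
     list_all2 refines xs' xs"

fun rel_coal :: "layout \<Rightarrow> nat nt \<Rightarrow> layout"
and rel_coals :: "layout list \<Rightarrow> nat nt list \<Rightarrow> layout list" where
  "rel_coal L (Leaf _) = coal L"
| "rel_coal (Leaf x) (Node bs) = Leaf x"
| "rel_coal (Node ls) (Node bs) = Node (rel_coals ls bs)"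
| "rel_coals (l # ls) (b # bs) = rel_coal l b # rel_coals ls bs"
| "rel_coals [] _ = []"
| "rel_coals _ [] = []"

end

theory Submission
  imports Defs
begin

text \<open>
  For a flat layout, \<open>\<Phi>((s, d) # M, x) = (x mod s) d + \<Phi>(M, x div s)\<close>, and for a
  concatenation \<open>\<Phi>(M @ N, x) = \<Phi>(M, x mod |M|) + \<Phi>(N, x div |M|)\<close> with \<open>|M|\<close> the size
  of \<open>M\<close>.  Hence dropping modes of size 1 and merging a mode \<open>(s, d)\<close> with a following
  mode of stride \<open>s d\<close> preserve \<open>\<Phi>\<close> and the size.  Conversely, a fully coalesced flat
  layout is determined by its function on \<open>[0, size)\<close>: evaluating at 1 gives the first
  stride; if the first sizes \<open>s < t\<close> of two such layouts differed, evaluating at \<open>s\<close> would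
  give the second stride of the first layout on one side and \<open>s\<close> times the first stride on
  the other, so the first two modes of that layout could be merged; and evaluating at
  multiples of \<open>s\<close> recovers the remaining modes.  This is the case of a leaf \<open>Sbar\<close>.  For a
  tuple \<open>Sbar\<close>, the flattening of a layout refining it is the concatenation of its relative
  modes, whose sizes are the positive entries of \<open>Sbar\<close>; by the concatenation formula two
  such functions agree iff they agree mode by mode, and induction on \<open>Sbar\<close> finishes.
\<close>

fun eval_modes :: "(nat \<times> nat) list \<Rightarrow> nat \<Rightarrow> nat" where
  "eval_modes [] x = 0"
| "eval_modes ((s, d) # M) x = x mod s * d + eval_modes M (x div s)"

definition modes_size :: "(nat \<times> nat) list \<Rightarrow> nat" where
  "modes_size M = prod_list (map fst M)"

definition modes_fun :: "(nat \<times> nat) list \<Rightarrow> nat \<Rightarrow> nat option" where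
  "modes_fun M x = (if x < modes_size M then Some (eval_modes M x) else None)"

lemma modes_size_simps [simp]:
  "modes_size [] = 1"
  "modes_size ((s, d) # M) = s * modes_size M"
  "modes_size (M @ N) = modes_size M * modes_size N"
  by (simp_all add: modes_size_def)

lemma modes_size_pos: "\<forall>(s, d) \<in> set M. 0 < s \<Longrightarrow> 0 < modes_size M"
  by (induction M) auto

lemma one_less_modes_size: "\<forall>(s, d) \<in> set M. 1 < s \<Longrightarrow> M \<noteq> [] \<Longrightarrow> 1 < modes_size M"
proof (induction M)
  case (Cons p M)
  then show ?case by (cases "M = []") (auto simp: one_less_mult)
qed simp

lemma phi_flat_eq_eval_modes: "phi_flat M = eval_modes M"
proof
  fix x
  show "phi_flat M x = eval_modes M x"
  proof (induction M arbitrary: x)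
    case Nil
    then show ?case by (simp add: phi_flat_def)
  next
    case (Cons p M)
    obtain s d where p: "p = (s, d)" by fastforce
    have "phi_flat ((s, d) # M) x = x mod s * d + phi_flat M (x div s)"
      unfolding phi_flat_def
      by (simp only: length_Cons sum.lessThan_Suc_shift prod.lessThan_Suc_shift nth_Cons_0
          nth_Cons_Suc fst_conv snd_conv lessThan_0 prod.empty div_by_1 div_mult2_eq)
    then show ?case using Cons p by simp
  qed
qed

lemma flat_map_nt: "flat (map_nt f X) = map f (flat X)"
  by (induction X) (simp_all add: map_concat comp_def cong: map_cong)

lemma nt_size_shape: "nt_size (shape L) = modes_size (flat L)"
  by (simp add: nt_size_def shape_def flat_map_nt modes_size_def)

lemma layout_fun_eq_modes_fun: "layout_fun L = modes_fun (flat L)"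
  by (simp add: layout_fun_def modes_fun_def fun_eq_iff nt_size_shape phi_flat_eq_eval_modes)

lemma modes_fun_eq_iff:
  "modes_fun M = modes_fun N \<longleftrightarrow>
     modes_size M = modes_size N \<and> (\<forall>x < modes_size M. eval_modes M x = eval_modes N x)"
proof
  assume eq: "modes_fun M = modes_fun N"
  then have "x < modes_size M \<longleftrightarrow> x < modes_size N" for x
    by (metis modes_fun_def option.distinct(1))
  then have "modes_size M = modes_size N"
    by (metis less_irrefl nat_neq_iff)
  with eq show "modes_size M = modes_size N \<and> (\<forall>x < modes_size M. eval_modes M x = eval_modes N x)"
    by (metis modes_fun_def option.inject)
qed (auto simp: modes_fun_def)

lemma eval_modes_0 [simp]: "eval_modes M 0 = 0"
proof (induction M)
  case (Cons p M)
  then show ?case by (cases p) simp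
qed simp

lemma eval_modes_append: "eval_modes (M @ N) x = eval_modes M x + eval_modes N (x div modes_size M)"
  by (induction M x rule: eval_modes.induct) (auto simp: div_mult2_eq)

lemma eval_modes_mod_modes_size: "eval_modes M (x mod modes_size M) = eval_modes M x"
proof (induction M x rule: eval_modes.induct)
  case (2 s d M x)
  have "x mod (s * modes_size M) div s = x div s mod modes_size M"
    by (cases "s = 0") (simp_all add: mod_mult2_eq)
  then show ?case using 2 by (simp add: mod_mod_cancel)
qed simp

lemma modes_fun_append_eq_iff:
  assumes size1: "modes_size M1 = modes_size N1" and pos1: "0 < modes_size M1"
    and pos2: "0 < modes_size M2"
  shows "modes_fun (M1 @ M2) = modes_fun (N1 @ N2) \<longleftrightarrow>
    modes_fun M1 = modes_fun N1 \<and> modes_fun M2 = modes_fun N2"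
proof -
  define p where "p = modes_size M1"
  have eval_M1: "eval_modes M1 x = eval_modes M1 (x mod p)"
    and eval_N1: "eval_modes N1 x = eval_modes N1 (x mod p)" for x
    using eval_modes_mod_modes_size size1 by (metis p_def)+
  have "(\<forall>x < p * modes_size M2. eval_modes (M1 @ M2) x = eval_modes (N1 @ N2) x) \<longleftrightarrow>
      (\<forall>x < p. eval_modes M1 x = eval_modes N1 x) \<and>
      (\<forall>y < modes_size M2. eval_modes M2 y = eval_modes N2 y)"
    (is "?whole \<longleftrightarrow> ?first \<and> ?second")
  proof
    assume whole: ?whole
    have ?first
    proof (intro allI impI)
      fix x assume "x < p"
      moreover from this have "x < p * modes_size M2"
        using pos2 by (metis less_le_trans mult.right_neutral mult_le_mono2 Suc_leI One_nat_def)
      with whole have "eval_modes (M1 @ M2) x = eval_modes (N1 @ N2) x" by blast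
      ultimately show "eval_modes M1 x = eval_modes N1 x"
        using size1 by (simp add: eval_modes_append p_def)
    qed
    moreover have ?second
    proof (intro allI impI)
      fix y assume "y < modes_size M2"
      then have "p * y < p * modes_size M2" using pos1 p_def by simp
      with whole have "eval_modes (M1 @ M2) (p * y) = eval_modes (N1 @ N2) (p * y)" by blast
      moreover have "eval_modes M1 (p * y) = 0" "eval_modes N1 (p * y) = 0"
        using eval_M1[of "p * y"] eval_N1[of "p * y"] by simp_all
      ultimately show "eval_modes M2 y = eval_modes N2 y"
        using pos1 size1 by (simp add: eval_modes_append p_def)
    qed
    ultimately show "?first \<and> ?second" ..
  next
    assume parts: "?first \<and> ?second"
    show ?whole
    proof (intro allI impI)
      fix x assume "x < p * modes_size M2"
      then have "x div p < modes_size M2"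
        by (simp add: div_less_iff_less_mult mult.commute pos1 p_def)
      moreover have "eval_modes M1 x = eval_modes N1 x"
        using parts eval_M1[of x] eval_N1[of x] pos1 p_def by (metis mod_less_divisor)
      ultimately show "eval_modes (M1 @ M2) x = eval_modes (N1 @ N2) x"
        using parts size1 by (simp add: eval_modes_append p_def)
    qed
  qed
  then show ?thesis
    using size1 pos1 by (auto simp: modes_fun_eq_iff p_def)
qed

lemma modes_fun_concat_eq_iff:
  assumes "list_all2 (\<lambda>M N. modes_size M = modes_size N) Ms Ns"
    and "\<forall>M \<in> set Ms. 0 < modes_size M"
  shows "modes_fun (concat Ms) = modes_fun (concat Ns) \<longleftrightarrow>
    list_all2 (\<lambda>M N. modes_fun M = modes_fun N) Ms Ns"
  using assms
proof (induction Ms arbitrary: Ns)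
  case Nil
  then show ?case by simp
next
  case (Cons M Ms)
  then obtain N Ns' where "Ns = N # Ns'" by (cases Ns) auto
  moreover have "0 < modes_size (concat Ms)"
    using Cons.prems(2) by (induction Ms) auto
  ultimately show ?case
    using Cons by (simp add: modes_fun_append_eq_iff)
qed

lemma eval_modes_merge_modes: "eval_modes (merge_modes M) = eval_modes M"
proof (induction M rule: merge_modes.induct)
  case (2 s d rest)
  show ?case
  proof (cases "merge_modes rest")
    case Nil
    with "2.IH" show ?thesis by (simp add: fun_eq_iff)
  next
    case (Cons q r)
    obtain s2 d2 where q: "q = (s2, d2)" by fastforce
    have IH: "eval_modes ((s2, d2) # r) y = eval_modes rest y" for y
      using "2.IH" Cons q by (simp add: fun_eq_iff)
    have "eval_modes (merge_modes ((s, d) # rest)) x =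
        x mod s * d + eval_modes ((s2, d2) # r) (x div s)" for x
    proof (cases "d2 = s * d")
      case True
      then have "eval_modes (merge_modes ((s, d) # rest)) x =
          x mod (s * s2) * d + eval_modes r (x div (s * s2))"
        using Cons q by simp
      also have "\<dots> = x mod s * d + eval_modes ((s2, d2) # r) (x div s)"
        using True
        by (simp only: eval_modes.simps mod_mult2_eq[of x s s2] div_mult2_eq[of x s s2])
          (simp add: algebra_simps)
      finally show ?thesis .
    qed (use Cons q in simp)
    then show ?thesis
      unfolding IH by (simp add: fun_eq_iff)
  qed
qed simp

lemma modes_size_merge_modes: "modes_size (merge_modes M) = modes_size M"
  by (induction M rule: merge_modes.induct) (auto split: list.split)

lemma modes_fun_coal_flat: "modes_fun (coal_flat M) = modes_fun M"
proof -
  let ?nontrivial = "filter (\<lambda>(s, d). s \<noteq> 1) M"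
  have "eval_modes ?nontrivial = eval_modes M \<and> modes_size ?nontrivial = modes_size M"
  proof (induction M)
    case (Cons p M)
    then show ?case by (cases p) (auto simp: fun_eq_iff)
  qed simp
  then show ?thesis
    by (simp add: coal_flat_def modes_fun_def fun_eq_iff eval_modes_merge_modes modes_size_merge_modes)
qed

definition coalesced :: "(nat \<times> nat) list \<Rightarrow> bool" where
  "coalesced M \<longleftrightarrow> (\<forall>(s, d) \<in> set M. 1 < s) \<and> successively (\<lambda>(s, d) (t, e). e \<noteq> s * d) M"

lemma coalesced_merge_modes: "\<forall>(s, d) \<in> set M. 1 < s \<Longrightarrow> coalesced (merge_modes M)"
proof (induction M rule: merge_modes.induct)
  case (2 s d rest)
  show ?case
  proof (cases "merge_modes rest")
    case Nil
    with "2.prems" show ?thesis by (simp add: coalesced_def)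
  next
    case (Cons q r)
    obtain s2 d2 where q: "q = (s2, d2)" by fastforce
    have "coalesced ((s2, d2) # r)" and "1 < s"
      using 2 Cons q by auto
    then show ?thesis
      using Cons q by (cases r) (auto simp: coalesced_def one_less_mult mult.assoc)
  qed
qed (simp add: coalesced_def)

lemma coalesced_Cons: "coalesced (p # M) \<Longrightarrow> coalesced M"
  by (cases p; cases M) (auto simp: coalesced_def)

lemma coalesced_modes_size_pos: "coalesced M \<Longrightarrow> 0 < modes_size M"
  by (rule modes_size_pos) (auto simp: coalesced_def)

lemma coalesced_one_less_modes_size: "coalesced M \<Longrightarrow> M \<noteq> [] \<Longrightarrow> 1 < modes_size M"
  unfolding coalesced_def using one_less_modes_size by blast

lemma coalesced_hd_le:
  assumes coal_R: "coalesced ((s, d) # R)" and coal_Q: "coalesced ((t, e) # Q)"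
    and same_fun: "modes_fun ((s, d) # R) = modes_fun ((t, e) # Q)"
  shows "t \<le> s"
proof (rule ccontr)
  assume "\<not> t \<le> s"
  then have "s < t" by simp
  have size: "s * modes_size R = t * modes_size Q"
    and eval: "\<And>x. x < s * modes_size R \<Longrightarrow> eval_modes ((s, d) # R) x = eval_modes ((t, e) # Q) x"
    using same_fun by (simp_all add: modes_fun_eq_iff)
  have "1 < s" "1 < t" "0 < modes_size Q"
    using coal_R coal_Q coalesced_modes_size_pos coalesced_Cons by (auto simp: coalesced_def)
  have "R \<noteq> []"
  proof
    assume "R = []"
    with size have "t * modes_size Q < t" using \<open>s < t\<close> by simp
    with \<open>0 < modes_size Q\<close> show False by simp
  qed
  then obtain s' d' R' where R: "R = (s', d') # R'" by (cases R) auto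
  have "1 < s'" and "d' \<noteq> s * d"
    using coal_R R by (auto simp: coalesced_def)
  have "1 < modes_size R"
    using coal_R \<open>R \<noteq> []\<close> coalesced_Cons coalesced_one_less_modes_size by blast
  then have "s < s * modes_size R" using \<open>1 < s\<close> by simp
  have "d = e"
    using eval[of 1] \<open>1 < s\<close> \<open>1 < t\<close> \<open>s < s * modes_size R\<close> by simp
  moreover have "d' = s * e"
    using eval[of s] \<open>1 < s'\<close> \<open>s < t\<close> \<open>s < s * modes_size R\<close> R by simp
  ultimately show False
    using \<open>d' \<noteq> s * d\<close> by simp
qed

lemma coalesced_unique:
  "coalesced M \<Longrightarrow> coalesced N \<Longrightarrow> modes_fun M = modes_fun N \<Longrightarrow> M = N"
proof (induction M arbitrary: N)
  case Nil
  then have "modes_size N = 1" by (simp add: modes_fun_eq_iff)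
  with Nil.prems(2) show ?case
    using coalesced_one_less_modes_size by fastforce
next
  case (Cons p R)
  obtain s d where p: "p = (s, d)" by fastforce
  have "modes_size N = modes_size (p # R)"
    using Cons.prems(3) by (simp add: modes_fun_eq_iff)
  then have "N \<noteq> []"
    using Cons.prems(1) coalesced_one_less_modes_size by fastforce
  then obtain t e Q where N: "N = (t, e) # Q" by (metis list.exhaust prod.exhaust)
  have "s = t"
    using coalesced_hd_le[of s d R t e Q] coalesced_hd_le[of t e Q s d R] Cons.prems p N by simp
  have "1 < s"
    using Cons.prems(1) p by (simp add: coalesced_def)
  have "0 < modes_size R"
    using Cons.prems(1) coalesced_Cons coalesced_modes_size_pos by blast
  have "modes_fun ([(s, d)] @ R) = modes_fun ([(s, e)] @ Q)"
    using Cons.prems(3) p N \<open>s = t\<close> by simp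
  then have head: "modes_fun [(s, d)] = modes_fun [(s, e)]" and tail: "modes_fun R = modes_fun Q"
    using modes_fun_append_eq_iff[of "[(s, d)]" "[(s, e)]" R Q] \<open>1 < s\<close> \<open>0 < modes_size R\<close>
    by simp_all
  from head have "modes_fun [(s, d)] 1 = modes_fun [(s, e)] 1" by simp
  with \<open>1 < s\<close> have "d = e" by (simp add: modes_fun_def)
  moreover from tail have "R = Q"
    using Cons.IH Cons.prems coalesced_Cons N by blast
  ultimately show ?case
    using p N \<open>s = t\<close> by simp
qed

lemma coalesced_coal_flat: "\<forall>(s, d) \<in> set M. 0 < s \<Longrightarrow> coalesced (coal_flat M)"
  unfolding coal_flat_def by (rule coalesced_merge_modes) auto

lemma coal_eq_iff_coal_flat_eq:
  assumes "coalesced (coal_flat (flat A))" and "coalesced (coal_flat (flat B))"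
  shows "coal A = coal B \<longleftrightarrow> coal_flat (flat A) = coal_flat (flat B)"
proof -
  have packed: "coal L = (case coal_flat (flat L) of [] \<Rightarrow> Leaf (1, 0) | [m] \<Rightarrow> Leaf m
      | C \<Rightarrow> Node (map Leaf C))" for L
    by (auto simp: coal_def Let_def split: list.split)
  show ?thesis
    using assms unfolding packed
    by (auto simp: coalesced_def inj_map_eq_map inj_def split: list.split)
qed

lemma is_layout_iff: "is_layout L \<longleftrightarrow> (\<forall>(s, d) \<in> set (flat L). 0 < s)"
  by (auto simp: is_layout_def shape_def flat_map_nt)

lemma coal_eq_iff_layout_fun_eq:
  assumes "is_layout A" and "is_layout B"
  shows "coal A = coal B \<longleftrightarrow> layout_fun A = layout_fun B"
proof -
  have "coalesced (coal_flat (flat A))" "coalesced (coal_flat (flat B))"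
    using assms by (simp_all add: is_layout_iff coalesced_coal_flat)
  then have "coal A = coal B \<longleftrightarrow> modes_fun (coal_flat (flat A)) = modes_fun (coal_flat (flat B))"
    using coalesced_unique by (auto simp: coal_eq_iff_coal_flat_eq)
  then show ?thesis
    by (simp add: modes_fun_coal_flat layout_fun_eq_modes_fun)
qed

lemma nt_size_Node: "nt_size (Node xs) = prod_list (map nt_size xs)"
  by (induction xs) (simp_all add: nt_size_def)

lemma refines_nt_size: "refines X Y \<Longrightarrow> nt_size X = nt_size Y"
proof (induction X Y rule: refines.induct)
  case (3 xs' xs)
  then have "map nt_size xs' = map nt_size xs"
    by (auto simp: list_all2_conv_all_nth intro: nth_equalityI)
  then show ?case by (simp add: nt_size_Node)
qed (simp_all add: nt_size_def)

lemma is_layout_Node: "is_layout (Node ls) \<longleftrightarrow> (\<forall>l \<in> set ls. is_layout l)"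
  by (auto simp: is_layout_iff)

lemma layout_fun_Node_eq_iff:
  assumes "list_all2 (\<lambda>a c. nt_size (shape a) = nt_size (shape c)) as cs"
    and "is_layout (Node as)"
  shows "layout_fun (Node as) = layout_fun (Node cs) \<longleftrightarrow>
    list_all2 (\<lambda>a c. layout_fun a = layout_fun c) as cs"
proof -
  have "\<forall>M \<in> set (map flat as). 0 < modes_size M"
    using assms(2) by (auto simp: is_layout_iff intro!: modes_size_pos)
  with assms(1) show ?thesis
    by (simp add: layout_fun_eq_modes_fun modes_fun_concat_eq_iff nt_size_shape
        list_all2_map1 list_all2_map2)
qed

lemma rel_coals_eq_map2: "rel_coals ls bs = map2 rel_coal ls bs"
proof (induction ls arbitrary: bs)
  case (Cons l ls)
  then show ?case by (cases bs) simp_all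
qed simp

theorem mainTheorem17:
  fixes A B :: layout and Sbar :: "nat nt"
  assumes "is_layout A" and "is_layout B"
    and "refines (shape A) Sbar" and "refines (shape B) Sbar"
  shows "layout_fun A = layout_fun B \<longleftrightarrow> rel_coal A Sbar = rel_coal B Sbar"
  using assms
proof (induction Sbar arbitrary: A B)
  case (Leaf n)
  then show ?case by (simp add: coal_eq_iff_layout_fun_eq)
next
  case (Node bs)
  obtain as cs where A: "A = Node as" and B: "B = Node cs"
    using Node.prems(3,4) by (cases A; cases B) (simp_all add: shape_def)
  have refines_as: "list_all2 (\<lambda>a b. refines (shape a) b) as bs"
    and refines_cs: "list_all2 (\<lambda>c b. refines (shape c) b) cs bs"
    using Node.prems(3,4) A B by (simp_all add: shape_def list_all2_map1)
  then have lengths: "length as = length bs" "length cs = length bs"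
    by (simp_all add: list_all2_lengthD)
  have modes: "layout_fun (as ! i) = layout_fun (cs ! i) \<longleftrightarrow>
      rel_coal (as ! i) (bs ! i) = rel_coal (cs ! i) (bs ! i)" if "i < length bs" for i
    using Node.IH[OF nth_mem[OF that]] Node.prems(1,2) A B refines_as refines_cs that lengths
    by (simp add: is_layout_Node list_all2_conv_all_nth)
  have "list_all2 (\<lambda>a c. nt_size (shape a) = nt_size (shape c)) as cs"
    using refines_as refines_cs lengths by (auto simp: list_all2_conv_all_nth) (metis refines_nt_size)
  then have "layout_fun A = layout_fun B \<longleftrightarrow>
      list_all2 (\<lambda>a c. layout_fun a = layout_fun c) as cs"
    using Node.prems(1) A B by (simp add: layout_fun_Node_eq_iff)
  also have "\<dots> \<longleftrightarrow> rel_coal A (Node bs) = rel_coal B (Node bs)"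
    using A B modes lengths by (simp add: list_all2_conv_all_nth rel_coals_eq_map2 list_eq_iff_nth_eq)
  finally show ?case .
qed

end
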